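(* Let $G$ be a looped simple graph and $k$ a positive integer. Then $G$ has a transverse circuit of size $k$ if and only if some looped simple graph locally equivalent to $G$ has a vertex of degree $k-1$.
   Context: A looped simple graph is a finite graph in which each vertex carries at most one loop and no two distinct vertices are joined by more than one edge. "Adjacent"/"neighbors" refer only to distinct vertices joined by a non-loop edge; the degree of $v$ is its number of neighbors (loops not counted). $A(G)$ is the $V(G)\times V(G)$ matrix over $GF(2)$ with diagonal entry $1$ exactly at looped vertices and off-diagonal entry $1$ exactly for adjacent pairs. $IAS(G)=(I\mid A(G)\mid A(G)+I)$ over $GF(2)$, rows indexed by $V(G)$; for $v\in V(G)$ the $v$-columns of the three blocks are labelled $\phi_G(v),\chi_G(v),\psi_G(v)$. The isotropic matroid $M[IAS(G)]$ is the binary column matroid of $IAS(G)$ on $W(G)=\{\phi_G(v),\chi_G(v),\psi_G(v):v\in V(G)\}$. The vertex triple of $v$ is $\tau_G(v)=\{\phi_G(v),\chi_G(v),\psi_G(v)\}$. A subtransversal is a subset of $W(G)$ meeting each vertex triple in at most one element; a transverse circuit of $G$ is a circuit of $M[IAS(G)]$ that is a subtransversal. Local equivalence: $G_\ell^v$ is obtained from $G$ by complementing the loop status of $v$; $G_s^v$ by complementing the adjacency status of every pair of distinct neighbors of $v$; $G_{ns}^v$ by doing this and also complementing the loop status of every neighbor of $v$. $H$ is locally equivalent to $G$ if $H$ is obtained from $G$ by a finite sequence of such operations. *)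

theory Defs
  imports Main "HOL-Library.Z2"
begin

text \<open>A looped simple graph on vertex type 'a is represented by its vertex set V
  together with its GF(2) adjacency matrix A(G), viewed as a boolean function:
  A v v = True iff v is looped, and for u ~= v, A u v = True iff u,v adjacent.\<close>

type_synonym 'a lgraph = "'a set \<times> ('a \<Rightarrow> 'a \<Rightarrow> bool)"

definition verts :: "'a lgraph \<Rightarrow> 'a set" where "verts G = fst G"
definition amat :: "'a lgraph \<Rightarrow> 'a \<Rightarrow> 'a \<Rightarrow> bool" where "amat G = snd G"

definition looped_simple_graph :: "'a lgraph \<Rightarrow> bool" where
  "looped_simple_graph G \<longleftrightarrow> finite (verts G)
     \<and> (\<forall>u v. amat G u v = amat G v u)
     \<and> (\<forall>u v. amat G u v \<longrightarrow> u \<in> verts G \<and> v \<in> verts G)"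

definition adjacent :: "'a lgraph \<Rightarrow> 'a \<Rightarrow> 'a \<Rightarrow> bool" where
  "adjacent G u v \<longleftrightarrow> u \<noteq> v \<and> amat G u v"

definition nbhd :: "'a lgraph \<Rightarrow> 'a \<Rightarrow> 'a set" where
  "nbhd G v = {w. adjacent G v w}"

definition degree :: "'a lgraph \<Rightarrow> 'a \<Rightarrow> nat" where
  "degree G v = card (nbhd G v)"

definition loop_comp :: "'a lgraph \<Rightarrow> 'a \<Rightarrow> 'a lgraph" where
  "loop_comp G v = (verts G, \<lambda>x y. if x = v \<and> y = v then \<not> amat G x y else amat G x y)"

definition simple_lc :: "'a lgraph \<Rightarrow> 'a \<Rightarrow> 'a lgraph" where
  "simple_lc G v = (verts G, \<lambda>x y. if x \<noteq> y \<and> x \<in> nbhd G v \<and> y \<in> nbhd G v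
                                     then \<not> amat G x y else amat G x y)"

definition nonsimple_lc :: "'a lgraph \<Rightarrow> 'a \<Rightarrow> 'a lgraph" where
  "nonsimple_lc G v = (verts G, \<lambda>x y. if x \<in> nbhd G v \<and> y \<in> nbhd G v
                                     then \<not> amat G x y else amat G x y)"

inductive locally_equivalent :: "'a lgraph \<Rightarrow> 'a lgraph \<Rightarrow> bool" where
  refl: "locally_equivalent G G"
| loop: "locally_equivalent G H \<Longrightarrow> v \<in> verts H \<Longrightarrow> locally_equivalent G (loop_comp H v)"
| simp: "locally_equivalent G H \<Longrightarrow> v \<in> verts H \<Longrightarrow> locally_equivalent G (simple_lc H v)"
| nsimp: "locally_equivalent G H \<Longrightarrow> v \<in> verts H \<Longrightarrow> locally_equivalent G (nonsimple_lc H v)"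

text \<open>Isotropic matroid: ground set W(G) of labelled columns of IAS(G) = (I | A | A+I) over GF(2).\<close>

datatype 'a iaselem = Phi 'a | Chi 'a | Psi 'a

definition ground :: "'a lgraph \<Rightarrow> 'a iaselem set" where
  "ground G = {Phi v | v. v \<in> verts G} \<union> {Chi v | v. v \<in> verts G} \<union> {Psi v | v. v \<in> verts G}"

definition b :: "bool \<Rightarrow> bit" where "b P = (if P then 1 else 0)"

fun ias_col :: "'a lgraph \<Rightarrow> 'a iaselem \<Rightarrow> 'a \<Rightarrow> bit" where
  "ias_col G (Phi v) u = b (u = v)"
| "ias_col G (Chi v) u = b (amat G u v)"
| "ias_col G (Psi v) u = b (amat G u v) + b (u = v)"

definition ias_dependent :: "'a lgraph \<Rightarrow> 'a iaselem set \<Rightarrow> bool" where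
  "ias_dependent G S \<longleftrightarrow> (\<exists>c :: 'a iaselem \<Rightarrow> bit. (\<exists>e\<in>S. c e \<noteq> 0)
       \<and> (\<forall>u \<in> verts G. (\<Sum>e\<in>S. c e * ias_col G e u) = 0))"

definition ias_circuit :: "'a lgraph \<Rightarrow> 'a iaselem set \<Rightarrow> bool" where
  "ias_circuit G C \<longleftrightarrow> C \<subseteq> ground G \<and> ias_dependent G C
       \<and> (\<forall>D. D \<subset> C \<longrightarrow> \<not> ias_dependent G D)"

definition vertex_triple :: "'a \<Rightarrow> 'a iaselem set" where
  "vertex_triple v = {Phi v, Chi v, Psi v}"

definition subtransversal :: "'a lgraph \<Rightarrow> 'a iaselem set \<Rightarrow> bool" where
  "subtransversal G S \<longleftrightarrow> S \<subseteq> ground G \<and> (\<forall>v \<in> verts G. card (S \<inter> vertex_triple v) \<le> 1)"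

definition transverse_circuit :: "'a lgraph \<Rightarrow> 'a iaselem set \<Rightarrow> bool" where
  "transverse_circuit G C \<longleftrightarrow> ias_circuit G C \<and> subtransversal G C"

end

(*
  Each local operation at v changes IAS(G), up to a permutation of columns inside the vertex
  triples, at most by the row operation adding row v to the rows of the neighbours of v.
  Such a change preserves linear (in)dependence of columns, so transverse circuits and their
  sizes are invariant under local equivalence.

  A vertex v of degree k - 1 gives the transverse circuit consisting of phi at the neighbours of v
  and the element of the triple of v whose column is the neighbourhood vector of v.

  Conversely, fix a transverse circuit C and a vertex v it meets. If C contains chi or psi at some
  y other than v, a non-simple local complementation at y turns that element into phi, unless
  it is the neighbourhood element of y. In that case either the whole neighbourhood circuit of y
  lies in C, hence equals C, or some neighbour z of y has phi(z) outside C, and complementing at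
  z first toggles the loop at y. Once C is phi away from v, its column sum shows that C is the
  neighbourhood circuit of v.
*)

theory Submission
  imports Defs "HOL-Combinatorics.Transposition"
begin

declare add_bit_eq_xor[simp del] mult_bit_eq_and[simp del]

lemma b_add [simp]: "b P + b Q = b (P \<noteq> Q)" by (simp add: b_def)
lemma b_mult [simp]: "b P * b Q = b (P \<and> Q)" by (simp add: b_def)
lemma b_eq_0_iff [simp]: "b P = 0 \<longleftrightarrow> \<not> P" by (simp add: b_def)
lemma b_eq_iff [simp]: "b P = b Q \<longleftrightarrow> (P \<longleftrightarrow> Q)" by (simp add: b_def)

lemma bit_add_eq_iff: "(x :: bit) + y = z \<longleftrightarrow> x = z + y"
  by (cases x; cases y; cases z) simp_all

fun vtx :: "'a iaselem \<Rightarrow> 'a" where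
  "vtx (Phi v) = v" | "vtx (Chi v) = v" | "vtx (Psi v) = v"

definition is_phi :: "'a iaselem \<Rightarrow> bool" where
  "is_phi e \<longleftrightarrow> (\<exists>x. e = Phi x)"

lemma in_ground_iff: "e \<in> ground G \<longleftrightarrow> vtx e \<in> verts G"
  by (cases e) (auto simp: ground_def)

lemma in_vertex_triple_iff: "e \<in> vertex_triple x \<longleftrightarrow> vtx e = x"
  by (cases e) (auto simp: vertex_triple_def)

lemma finite_ground: "finite (verts G) \<Longrightarrow> finite (ground G)"
  unfolding ground_def by auto

lemma ias_circuit_not_psubset:
  "ias_circuit G C \<Longrightarrow> ias_circuit G D \<Longrightarrow> D \<subseteq> C \<Longrightarrow> D = C"
  unfolding ias_circuit_def by blast

section \<open>Row operations on IAS(G)\<close>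

text \<open>The hypothesis \<open>col\<close> says that the column of IAS(G) at \<open>\<sigma> e\<close> is the column of IAS(G') at
  \<open>e\<close> after adding row \<open>v\<close> to every row \<open>u\<close> with \<open>n u = 1\<close>. Since \<open>n v = 0\<close>, this row operation
  is an involution.\<close>

lemma ias_col_row_op_converse:
  fixes n :: "'a \<Rightarrow> bit"
  assumes inv: "\<And>e. \<sigma> (\<sigma> e) = e" and nv: "n v = 0"
    and col: "\<And>e u. ias_col G (\<sigma> e) u = ias_col G' e u + n u * ias_col G' e v"
  shows "ias_col G' (\<sigma> e) u = ias_col G e u + n u * ias_col G e v"
  using col[of "\<sigma> e" u] col[of "\<sigma> e" v] by (simp add: inv nv bit_add_eq_iff)

lemma ias_dependent_row_op:
  fixes n :: "'a \<Rightarrow> bit"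
  assumes inj: "inj \<sigma>" and V: "verts G' = verts G" and v: "v \<in> verts G"
    and col: "\<And>e u. ias_col G (\<sigma> e) u = ias_col G' e u + n u * ias_col G' e v"
    and dep: "ias_dependent G' S"
  shows "ias_dependent G (\<sigma> ` S)"
proof -
  obtain c where c_nz: "\<exists>e\<in>S. c e \<noteq> 0"
    and c_rows: "\<forall>u \<in> verts G'. (\<Sum>e\<in>S. c e * ias_col G' e u) = 0"
    using dep unfolding ias_dependent_def by blast
  define c' where "c' = c \<circ> inv \<sigma>"
  have c'_\<sigma>: "c' (\<sigma> e) = c e" for e
    using inj by (simp add: c'_def)
  show ?thesis unfolding ias_dependent_def
  proof (intro exI conjI ballI)
    show "\<exists>e\<in>\<sigma> ` S. c' e \<noteq> 0" using c_nz c'_\<sigma> by auto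
  next
    fix u assume u: "u \<in> verts G"
    have "(\<Sum>x\<in>\<sigma> ` S. c' x * ias_col G x u) = (\<Sum>e\<in>S. c e * ias_col G (\<sigma> e) u)"
      using inj by (simp add: sum.reindex inj_on_subset c'_\<sigma>)
    also have "\<dots> = (\<Sum>e\<in>S. c e * ias_col G' e u) + n u * (\<Sum>e\<in>S. c e * ias_col G' e v)"
      by (simp add: col algebra_simps sum.distrib sum_distrib_left)
    also have "\<dots> = 0" using c_rows u v V by simp
    finally show "(\<Sum>x\<in>\<sigma> ` S. c' x * ias_col G x u) = 0" .
  qed
qed

lemma transverse_circuit_row_op:
  fixes n :: "'a \<Rightarrow> bit"
  assumes inv: "\<And>e. \<sigma> (\<sigma> e) = e" and vtx_\<sigma>: "\<And>e. vtx (\<sigma> e) = vtx e"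
    and V: "verts G' = verts G" and v: "v \<in> verts G" and nv: "n v = 0"
    and col: "\<And>e u. ias_col G (\<sigma> e) u = ias_col G' e u + n u * ias_col G' e v"
    and tc: "transverse_circuit G' C"
  shows "transverse_circuit G (\<sigma> ` C)"
proof -
  have inj: "inj \<sigma>" by (metis inj_def inv)
  have \<sigma>\<sigma>: "\<sigma> ` \<sigma> ` X = X" for X by (simp add: image_image inv)
  have ground_\<sigma>: "\<sigma> ` X \<subseteq> ground G \<longleftrightarrow> X \<subseteq> ground G'" for X
    by (auto simp: in_ground_iff vtx_\<sigma> V)
  have col': "ias_col G' (\<sigma> e) u = ias_col G e u + n u * ias_col G e v" for e u
    by (rule ias_col_row_op_converse[OF inv nv col])
  have C: "C \<subseteq> ground G'" "ias_dependent G' C" "\<forall>D. D \<subset> C \<longrightarrow> \<not> ias_dependent G' D"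
    "\<forall>x \<in> verts G'. card (C \<inter> vertex_triple x) \<le> 1"
    using tc unfolding transverse_circuit_def ias_circuit_def subtransversal_def by auto
  have minimal: "\<not> ias_dependent G D" if D: "D \<subset> \<sigma> ` C" for D
  proof
    assume "ias_dependent G D"
    then have "ias_dependent G' (\<sigma> ` D)"
      using ias_dependent_row_op[OF inj V[symmetric] _ col'] v V by simp
    moreover have "\<sigma> ` D \<subset> C"
      using D by (metis \<sigma>\<sigma> image_mono psubset_eq)
    ultimately show False using C(3) by blast
  qed
  have triple: "\<sigma> ` C \<inter> vertex_triple x = \<sigma> ` (C \<inter> vertex_triple x)" for x
    by (auto simp: in_vertex_triple_iff vtx_\<sigma>)
  show ?thesis
    using C(1,4) ias_dependent_row_op[OF inj V v col C(2)] minimal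
    unfolding transverse_circuit_def ias_circuit_def subtransversal_def
    by (auto simp: ground_\<sigma> triple card_image inj_on_subset[OF inj] V)
qed

lemma transverse_circuit_row_op_iff:
  fixes n :: "'a \<Rightarrow> bit"
  assumes inv: "\<And>e. \<sigma> (\<sigma> e) = e" and vtx_\<sigma>: "\<And>e. vtx (\<sigma> e) = vtx e"
    and V: "verts G' = verts G" and v: "v \<in> verts G" and nv: "n v = 0"
    and col: "\<And>e u. ias_col G (\<sigma> e) u = ias_col G' e u + n u * ias_col G' e v"
  shows "transverse_circuit G' C \<longleftrightarrow> transverse_circuit G (\<sigma> ` C)"
proof
  show "transverse_circuit G' C \<Longrightarrow> transverse_circuit G (\<sigma> ` C)"
    by (rule transverse_circuit_row_op[OF inv vtx_\<sigma> V v nv col])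
next
  assume "transverse_circuit G (\<sigma> ` C)"
  then have "transverse_circuit G' (\<sigma> ` \<sigma> ` C)"
    using transverse_circuit_row_op[OF inv vtx_\<sigma> V[symmetric] _ nv ias_col_row_op_converse[OF inv nv col]] v V
    by simp
  then show "transverse_circuit G' C" by (simp add: image_image inv)
qed

section \<open>Local complementation\<close>

lemma amat_sym: "looped_simple_graph G \<Longrightarrow> amat G u v = amat G v u"
  by (simp add: looped_simple_graph_def)

lemma amat_in_verts: "looped_simple_graph G \<Longrightarrow> amat G u v \<Longrightarrow> u \<in> verts G \<and> v \<in> verts G"
  unfolding looped_simple_graph_def by blast

lemma in_nbhd_iff: "w \<in> nbhd G v \<longleftrightarrow> v \<noteq> w \<and> amat G v w"
  by (simp add: nbhd_def adjacent_def)

lemma nbhd_subset_verts: "looped_simple_graph G \<Longrightarrow> nbhd G v \<subseteq> verts G"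
  by (auto simp: in_nbhd_iff dest: amat_in_verts)

lemma finite_nbhd:
  assumes "looped_simple_graph G"
  shows "finite (nbhd G v)"
proof -
  have "finite (verts G)" using assms by (simp add: looped_simple_graph_def)
  then show ?thesis by (rule finite_subset[OF nbhd_subset_verts[OF assms]])
qed

lemma verts_local_ops [simp]:
  "verts (loop_comp G v) = verts G" "verts (simple_lc G v) = verts G"
  "verts (nonsimple_lc G v) = verts G"
  by (simp_all add: verts_def loop_comp_def simple_lc_def nonsimple_lc_def)

lemma amat_local_ops:
  "amat (loop_comp G v) x y = (if x = v \<and> y = v then \<not> amat G x y else amat G x y)"
  "amat (simple_lc G v) x y =
     (if x \<noteq> y \<and> x \<in> nbhd G v \<and> y \<in> nbhd G v then \<not> amat G x y else amat G x y)"
  "amat (nonsimple_lc G v) x y =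
     (if x \<in> nbhd G v \<and> y \<in> nbhd G v then \<not> amat G x y else amat G x y)"
  by (simp_all add: amat_def loop_comp_def simple_lc_def nonsimple_lc_def)

lemma looped_simple_graph_local_ops:
  assumes "looped_simple_graph G" "v \<in> verts G"
  shows "looped_simple_graph (loop_comp G v)" "looped_simple_graph (simple_lc G v)"
    "looped_simple_graph (nonsimple_lc G v)"
  using assms unfolding looped_simple_graph_def by (auto simp: amat_local_ops in_nbhd_iff)

lemma locally_equivalent_looped_simple_graph:
  "locally_equivalent G H \<Longrightarrow> looped_simple_graph G \<Longrightarrow> looped_simple_graph H \<and> verts H = verts G"
  by (induction rule: locally_equivalent.induct) (auto simp: looped_simple_graph_local_ops)

lemma locally_equivalent_trans:
  "locally_equivalent H K \<Longrightarrow> locally_equivalent G H \<Longrightarrow> locally_equivalent G K"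
  by (induction rule: locally_equivalent.induct) (auto intro: locally_equivalent.intros)

definition nonsimple_lc_relabel :: "'a lgraph \<Rightarrow> 'a \<Rightarrow> 'a iaselem \<Rightarrow> 'a iaselem" where
  "nonsimple_lc_relabel G v =
     (if amat G v v then transpose (Phi v) (Chi v) else transpose (Phi v) (Psi v))"

definition simple_lc_relabel :: "'a lgraph \<Rightarrow> 'a \<Rightarrow> 'a iaselem \<Rightarrow> 'a iaselem" where
  "simple_lc_relabel G v e =
     (if vtx e = v then nonsimple_lc_relabel G v e
      else if vtx e \<in> nbhd G v then transpose (Chi (vtx e)) (Psi (vtx e)) e else e)"

lemma vtx_transpose_same_vtx: "vtx a = vtx c \<Longrightarrow> vtx (transpose a c e) = vtx e"
  by (simp add: transpose_def)

lemma nonsimple_lc_relabel_involutory: "nonsimple_lc_relabel G v (nonsimple_lc_relabel G v e) = e"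
  by (simp add: nonsimple_lc_relabel_def)

lemma vtx_nonsimple_lc_relabel: "vtx (nonsimple_lc_relabel G v e) = vtx e"
  by (simp add: nonsimple_lc_relabel_def vtx_transpose_same_vtx)

lemma simple_lc_relabel_involutory: "simple_lc_relabel G v (simple_lc_relabel G v e) = e"
  by (cases e) (auto simp: simple_lc_relabel_def nonsimple_lc_relabel_def transpose_def)

lemma vtx_simple_lc_relabel: "vtx (simple_lc_relabel G v e) = vtx e"
  by (simp add: simple_lc_relabel_def vtx_nonsimple_lc_relabel vtx_transpose_same_vtx)

lemma ias_col_loop_comp: "ias_col G (transpose (Chi v) (Psi v) e) = ias_col (loop_comp G v) e"
  by (cases e) (auto simp: transpose_def amat_local_ops)

lemma ias_col_nonsimple_lc:
  assumes "looped_simple_graph G"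
  shows "ias_col G (nonsimple_lc_relabel G v e) u =
           ias_col (nonsimple_lc G v) e u + b (u \<in> nbhd G v) * ias_col (nonsimple_lc G v) e v"
  using amat_sym[OF assms]
  by (cases e) (auto simp: transpose_def amat_local_ops nonsimple_lc_relabel_def in_nbhd_iff)

lemma ias_col_simple_lc:
  assumes "looped_simple_graph G"
  shows "ias_col G (simple_lc_relabel G v e) u =
           ias_col (simple_lc G v) e u + b (u \<in> nbhd G v) * ias_col (simple_lc G v) e v"
  using amat_sym[OF assms]
  by (cases e) (auto simp: transpose_def amat_local_ops nonsimple_lc_relabel_def
      simple_lc_relabel_def in_nbhd_iff)

lemma transverse_circuit_loop_comp_iff:
  "v \<in> verts G \<Longrightarrow>
     transverse_circuit (loop_comp G v) C \<longleftrightarrow> transverse_circuit G (transpose (Chi v) (Psi v) ` C)"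
  by (rule transverse_circuit_row_op_iff[where n = "\<lambda>_. 0"])
    (simp_all add: vtx_transpose_same_vtx ias_col_loop_comp)

lemma transverse_circuit_nonsimple_lc_iff:
  "looped_simple_graph G \<Longrightarrow> v \<in> verts G \<Longrightarrow>
     transverse_circuit (nonsimple_lc G v) C \<longleftrightarrow> transverse_circuit G (nonsimple_lc_relabel G v ` C)"
  by (rule transverse_circuit_row_op_iff[OF _ _ _ _ _ ias_col_nonsimple_lc])
    (simp_all add: nonsimple_lc_relabel_involutory vtx_nonsimple_lc_relabel in_nbhd_iff)

lemma transverse_circuit_simple_lc_iff:
  "looped_simple_graph G \<Longrightarrow> v \<in> verts G \<Longrightarrow>
     transverse_circuit (simple_lc G v) C \<longleftrightarrow> transverse_circuit G (simple_lc_relabel G v ` C)"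
  by (rule transverse_circuit_row_op_iff[OF _ _ _ _ _ ias_col_simple_lc])
    (simp_all add: simple_lc_relabel_involutory vtx_simple_lc_relabel in_nbhd_iff)

lemma card_image_involution: "(\<And>e. \<sigma> (\<sigma> e) = e) \<Longrightarrow> card (\<sigma> ` C) = card C"
  by (metis card_image inj_on_def)

lemma locally_equivalent_transverse_circuit:
  assumes "locally_equivalent G H" "looped_simple_graph G" "transverse_circuit H C"
  shows "\<exists>C'. transverse_circuit G C' \<and> card C' = card C"
  using assms
proof (induction arbitrary: C rule: locally_equivalent.induct)
  case (refl G)
  then show ?case by blast
next
  case (loop G H v)
  then show ?case
    using transverse_circuit_loop_comp_iff
      card_image_involution[of "transpose (Chi v) (Psi v)", OF transpose_involutory]
    by metis
next
  case (simp G H v)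
  then have "looped_simple_graph H" using locally_equivalent_looped_simple_graph by blast
  then show ?case
    using simp transverse_circuit_simple_lc_iff
      card_image_involution[of "simple_lc_relabel H v", OF simple_lc_relabel_involutory]
    by metis
next
  case (nsimp G H v)
  then have "looped_simple_graph H" using locally_equivalent_looped_simple_graph by blast
  then show ?case
    using nsimp transverse_circuit_nonsimple_lc_iff
      card_image_involution[of "nonsimple_lc_relabel H v", OF nonsimple_lc_relabel_involutory]
    by metis
qed

section \<open>Neighbourhood circuits\<close>

lemma row_sum_insert_phis:
  assumes "finite D" "D \<subseteq> insert e0 (Phi ` N)" "\<not> is_phi e0"
  shows "(\<Sum>e\<in>D. c e * ias_col G e u) =
           (if e0 \<in> D then c e0 * ias_col G e0 u else 0) + (if Phi u \<in> D then c (Phi u) else 0)"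
proof -
  have "(\<Sum>e\<in>D. c e * ias_col G e u) =
      (\<Sum>e\<in>D \<inter> {e0}. c e * ias_col G e u) + (\<Sum>e\<in>D - {e0}. c e * ias_col G e u)"
    by (rule sum.Int_Diff[OF assms(1)])
  also have "(\<Sum>e\<in>D \<inter> {e0}. c e * ias_col G e u) = (if e0 \<in> D then c e0 * ias_col G e0 u else 0)"
    by (cases "e0 \<in> D") (auto simp: Int_insert_right)
  also have "(\<Sum>e\<in>D - {e0}. c e * ias_col G e u) = (\<Sum>e\<in>D - {e0}. if e = Phi u then c e else 0)"
  proof (rule sum.cong)
    fix e assume "e \<in> D - {e0}"
    then obtain x where "e = Phi x" using assms(2) by blast
    then show "c e * ias_col G e u = (if e = Phi u then c e else 0)" by (simp add: b_def)
  qed simp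
  also have "\<dots> = (if Phi u \<in> D then c (Phi u) else 0)"
    using assms(1,3) by (auto simp: sum.delta' is_phi_def)
  finally show ?thesis .
qed

definition nbhd_elem :: "'a lgraph \<Rightarrow> 'a \<Rightarrow> 'a iaselem" where
  "nbhd_elem H v = (if amat H v v then Psi v else Chi v)"

definition nbhd_circuit :: "'a lgraph \<Rightarrow> 'a \<Rightarrow> 'a iaselem set" where
  "nbhd_circuit H v = insert (nbhd_elem H v) (Phi ` nbhd H v)"

lemma nbhd_elem_not_phi: "\<not> is_phi (nbhd_elem H v)"
  by (simp add: nbhd_elem_def is_phi_def)

lemma vtx_nbhd_elem: "vtx (nbhd_elem H v) = v"
  by (simp add: nbhd_elem_def)

lemma ias_col_nbhd_elem:
  "looped_simple_graph H \<Longrightarrow> ias_col H (nbhd_elem H v) u = b (u \<in> nbhd H v)"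
  using amat_sym[of H u v] by (auto simp: nbhd_elem_def in_nbhd_iff)

lemma card_nbhd_circuit:
  assumes "looped_simple_graph H"
  shows "card (nbhd_circuit H v) = degree H v + 1"
proof -
  have "finite (nbhd H v)" by (rule finite_nbhd[OF assms])
  moreover have "nbhd_elem H v \<notin> Phi ` nbhd H v"
    using nbhd_elem_not_phi[of H v] unfolding is_phi_def by blast
  moreover have "card (Phi ` nbhd H v) = card (nbhd H v)"
    by (rule card_image) (simp add: inj_on_def)
  ultimately show ?thesis
    by (simp add: nbhd_circuit_def degree_def)
qed

lemma row_sum_subset_nbhd_circuit:
  assumes H: "looped_simple_graph H" and D: "D \<subseteq> nbhd_circuit H v"
  shows "(\<Sum>e\<in>D. c e * ias_col H e u) =
    (if nbhd_elem H v \<in> D then c (nbhd_elem H v) * b (u \<in> nbhd H v) else 0) +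
    (if Phi u \<in> D then c (Phi u) else 0)"
proof -
  have D': "D \<subseteq> insert (nbhd_elem H v) (Phi ` nbhd H v)"
    using D by (simp add: nbhd_circuit_def)
  moreover have "finite D"
    using finite_subset[OF D'] finite_nbhd[OF H] by simp
  ultimately show ?thesis
    using row_sum_insert_phis[OF _ _ nbhd_elem_not_phi, of D H v "nbhd H v" c H u]
    by (simp add: ias_col_nbhd_elem[OF H])
qed

lemma ias_dependent_nbhd_circuit:
  assumes H: "looped_simple_graph H"
  shows "ias_dependent H (nbhd_circuit H v)"
  unfolding ias_dependent_def
proof (intro exI[of _ "\<lambda>_. 1"] conjI ballI)
  show "\<exists>e\<in>nbhd_circuit H v. (1::bit) \<noteq> 0" by (auto simp: nbhd_circuit_def)
  fix u
  have "Phi u \<in> nbhd_circuit H v \<longleftrightarrow> u \<in> nbhd H v"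
    by (auto simp: nbhd_circuit_def nbhd_elem_def)
  then show "(\<Sum>e\<in>nbhd_circuit H v. 1 * ias_col H e u) = 0"
    using row_sum_subset_nbhd_circuit[OF H subset_refl, of "\<lambda>_. 1" u]
    by (simp add: nbhd_circuit_def b_def)
qed

lemma ias_independent_psubset_nbhd_circuit:
  assumes H: "looped_simple_graph H" and D: "D \<subset> nbhd_circuit H v"
  shows "\<not> ias_dependent H D"
proof
  define e0 where "e0 = nbhd_elem H v"
  assume "ias_dependent H D"
  then obtain c where c_nz: "\<exists>e\<in>D. c e \<noteq> 0"
    and c_rows: "\<forall>u\<in>verts H. (\<Sum>e\<in>D. c e * ias_col H e u) = 0"
    unfolding ias_dependent_def by blast
  have row: "(if e0 \<in> D then c e0 * b (u \<in> nbhd H v) else 0) + (if Phi u \<in> D then c (Phi u) else 0) = 0"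
    if "u \<in> verts H" for u
    using row_sum_subset_nbhd_circuit[OF H, of D v c u] c_rows that D by (auto simp: e0_def)
  have c_e0: "c e0 = 0" if e0_in: "e0 \<in> D"
  proof -
    obtain w where "w \<in> nbhd H v" "Phi w \<notin> D"
      using D e0_in by (auto simp: nbhd_circuit_def e0_def)
    then show ?thesis using row[of w] nbhd_subset_verts[OF H, of v] e0_in by auto
  qed
  have "c e = 0" if e: "e \<in> D" for e
  proof (cases "e = e0")
    case True
    then show ?thesis using c_e0 e by simp
  next
    case False
    then obtain x where "e = Phi x" "x \<in> nbhd H v"
      using e D by (auto simp: nbhd_circuit_def e0_def)
    then show ?thesis using row[of x] c_e0 nbhd_subset_verts[OF H, of v] e by (auto split: if_splits)
  qed
  then show False using c_nz by blast
qed

lemma transverse_circuit_nbhd_circuit: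
  assumes H: "looped_simple_graph H" and v: "v \<in> verts H"
  shows "transverse_circuit H (nbhd_circuit H v)"
proof -
  have single: "card (nbhd_circuit H v \<inter> vertex_triple x) \<le> 1" for x
  proof -
    have "nbhd_circuit H v \<inter> vertex_triple x \<subseteq> {if x = v then nbhd_elem H v else Phi x}"
      by (auto simp: nbhd_circuit_def in_vertex_triple_iff vtx_nbhd_elem in_nbhd_iff)
    then show ?thesis using card_mono[of "{_}"] by fastforce
  qed
  have "nbhd_circuit H v \<subseteq> ground H"
    using nbhd_subset_verts[OF H, of v] v by (auto simp: nbhd_circuit_def in_ground_iff vtx_nbhd_elem)
  then show ?thesis
    using ias_dependent_nbhd_circuit[OF H] ias_independent_psubset_nbhd_circuit[OF H] single
    unfolding transverse_circuit_def ias_circuit_def subtransversal_def by blast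
qed

section \<open>Clearing a transverse circuit away from one vertex\<close>

lemma transverse_circuit_subset_ground: "transverse_circuit H C \<Longrightarrow> C \<subseteq> ground H"
  unfolding transverse_circuit_def ias_circuit_def by blast

lemma transverse_circuit_finite:
  "finite (verts H) \<Longrightarrow> transverse_circuit H C \<Longrightarrow> finite C"
  using finite_subset[OF transverse_circuit_subset_ground finite_ground] by blast

lemma transverse_circuit_vtx_in_verts:
  "transverse_circuit H C \<Longrightarrow> e \<in> C \<Longrightarrow> vtx e \<in> verts H"
  using transverse_circuit_subset_ground in_ground_iff by blast

lemma transverse_circuit_vtx_inj:
  assumes tc: "transverse_circuit H C" and "e \<in> C" "f \<in> C" "vtx e = vtx f"
  shows "e = f"
proof -
  have "card (C \<inter> vertex_triple (vtx e)) \<le> Suc 0"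
    using tc transverse_circuit_vtx_in_verts[OF tc assms(2)]
    unfolding transverse_circuit_def subtransversal_def by simp
  moreover have "finite (C \<inter> vertex_triple (vtx e))"
    by (simp add: vertex_triple_def)
  ultimately show ?thesis
    using assms(2-4) by (auto simp: card_le_Suc0_iff_eq in_vertex_triple_iff)
qed

text \<open>By minimality, every coefficient of a dependency on a circuit is nonzero, i.e.\ 1 over GF(2).\<close>

lemma ias_circuit_column_sum:
  assumes fin: "finite C" and circ: "ias_circuit H C" and u: "u \<in> verts H"
  shows "(\<Sum>e\<in>C. ias_col H e u) = 0"
proof -
  obtain c where c_nz: "\<exists>e\<in>C. c e \<noteq> 0"
    and c_rows: "\<forall>u\<in>verts H. (\<Sum>e\<in>C. c e * ias_col H e u) = 0"
    using circ unfolding ias_circuit_def ias_dependent_def by (elim conjE exE)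
  define D where "D = {e \<in> C. c e \<noteq> 0}"
  have sum_D: "(\<Sum>e\<in>C. c e * ias_col H e u) = (\<Sum>e\<in>D. c e * ias_col H e u)" for u
    by (rule sum.mono_neutral_right[OF fin]) (auto simp: D_def)
  have "ias_dependent H D"
    unfolding ias_dependent_def using c_nz c_rows sum_D by (auto simp: D_def)
  moreover have "D \<subseteq> C" by (auto simp: D_def)
  ultimately have "D = C" using circ unfolding ias_circuit_def by (meson psubsetI)
  then have "\<forall>e\<in>C. c e = 1" by (auto simp: D_def)
  then show ?thesis using c_rows u by simp
qed

lemma ias_circuit_not_all_phi:
  assumes fin: "finite C" and circ: "ias_circuit H C"
  shows "\<exists>e\<in>C. \<not> is_phi e"
proof (rule ccontr)
  assume all_phi: "\<not> (\<exists>e\<in>C. \<not> is_phi e)"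
  have "C \<noteq> {}"
    using circ unfolding ias_circuit_def ias_dependent_def by fast
  then obtain x where x: "Phi x \<in> C"
    using all_phi unfolding is_phi_def by (metis ex_in_conv)
  have "C \<subseteq> insert (Chi x) (Phi ` {w. Phi w \<in> C})"
    using all_phi by (auto simp: is_phi_def)
  moreover have "Chi x \<notin> C" using all_phi by (auto simp: is_phi_def)
  ultimately have "(\<Sum>e\<in>C. 1 * ias_col H e x) = 1"
    using row_sum_insert_phis[OF fin, of "Chi x" _ "\<lambda>_. 1" H x] x by (simp add: is_phi_def)
  moreover have "x \<in> verts H"
    using x circ by (force simp: ias_circuit_def in_ground_iff)
  ultimately show False using ias_circuit_column_sum[OF fin circ] by simp
qed

definition non_phi_vertices :: "'a \<Rightarrow> 'a iaselem set \<Rightarrow> 'a set" where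
  "non_phi_vertices v C = vtx ` {e \<in> C. vtx e \<noteq> v \<and> \<not> is_phi e}"

lemma in_non_phi_vertices_iff:
  "x \<in> non_phi_vertices v C \<longleftrightarrow> (\<exists>e\<in>C. vtx e = x \<and> x \<noteq> v \<and> \<not> is_phi e)"
  by (auto simp: non_phi_vertices_def)

lemma transverse_circuit_phi_off_vertex:
  assumes H: "looped_simple_graph H" and tc: "transverse_circuit H C"
    and no_non_phi: "non_phi_vertices v C = {}"
  obtains e0 where "e0 \<in> C" "\<not> is_phi e0" "vtx e0 = v" "C = insert e0 (Phi ` {w. Phi w \<in> C})"
proof -
  have fin: "finite C"
    using transverse_circuit_finite[OF _ tc] H by (simp add: looped_simple_graph_def)
  have phi_off_v: "is_phi e" if "e \<in> C" "vtx e \<noteq> v" for e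
    using no_non_phi that unfolding non_phi_vertices_def by blast
  have "\<exists>e0\<in>C. \<not> is_phi e0"
    using ias_circuit_not_all_phi[OF fin, of H] tc by (simp add: transverse_circuit_def)
  then obtain e0 where e0: "e0 \<in> C" "\<not> is_phi e0" by blast
  have e0_v: "vtx e0 = v" using phi_off_v e0 by blast
  have "e = e0" if "e \<in> C" "\<not> is_phi e" for e
    using transverse_circuit_vtx_inj[OF tc that(1) e0(1)] phi_off_v that e0_v by blast
  then have "C = insert e0 (Phi ` {w. Phi w \<in> C})"
    using e0(1) by (auto simp: is_phi_def)
  then show thesis using that e0 e0_v by blast
qed

lemma transverse_circuit_eq_nbhd_circuit:
  assumes H: "looped_simple_graph H" and tc: "transverse_circuit H C"
    and no_non_phi: "non_phi_vertices v C = {}"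
  shows "C = nbhd_circuit H v"
proof -
  define S where "S = {w. Phi w \<in> C}"
  obtain e0 where e0: "e0 \<in> C" "\<not> is_phi e0" "vtx e0 = v" and C_eq: "C = insert e0 (Phi ` S)"
    using transverse_circuit_phi_off_vertex[OF H tc no_non_phi] unfolding S_def by blast
  have fin: "finite C"
    using transverse_circuit_finite[OF _ tc] H by (simp add: looped_simple_graph_def)
  have v: "v \<in> verts H" using transverse_circuit_vtx_in_verts[OF tc e0(1)] e0(3) by simp
  have v_notin_S: "v \<notin> S"
  proof
    assume "v \<in> S"
    then have "Phi v = e0" using transverse_circuit_vtx_inj[OF tc _ e0(1)] e0(3) by (simp add: S_def)
    then show False using e0(2) by (auto simp: is_phi_def)
  qed
  have rows: "ias_col H e0 u + b (u \<in> S) = 0" if "u \<in> verts H" for u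
  proof -
    have "(\<Sum>e\<in>C. 1 * ias_col H e u) =
        (if e0 \<in> C then 1 * ias_col H e0 u else 0) + (if Phi u \<in> C then 1 else 0)"
      by (rule row_sum_insert_phis[where N = S, OF fin _ e0(2)]) (simp add: C_eq)
    moreover have "(\<Sum>e\<in>C. 1 * ias_col H e u) = 0"
      using ias_circuit_column_sum[OF fin _ that] tc by (simp add: transverse_circuit_def)
    ultimately show ?thesis using e0(1) by (simp add: S_def b_def)
  qed
  have e0_cases: "e0 = Chi v \<or> e0 = Psi v" using e0(2,3) by (cases e0) (auto simp: is_phi_def)
  have "e0 = nbhd_elem H v"
    using rows[OF v] v_notin_S e0_cases by (auto simp: nbhd_elem_def)
  moreover have "S = nbhd H v"
  proof (intro set_eqI iffI)
    fix w assume w: "w \<in> S"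
    then have "w \<in> verts H"
      using transverse_circuit_vtx_in_verts[OF tc] by (force simp: S_def)
    then show "w \<in> nbhd H v"
      using rows[of w] w v_notin_S e0_cases amat_sym[OF H, of v w] by (auto simp: in_nbhd_iff)
  next
    fix w assume w: "w \<in> nbhd H v"
    then have "w \<in> verts H" using nbhd_subset_verts[OF H] by blast
    then show "w \<in> S"
      using rows[of w] w e0_cases amat_sym[OF H, of v w] by (auto simp: in_nbhd_iff)
  qed
  ultimately show ?thesis by (simp add: C_eq nbhd_circuit_def)
qed

lemma nonsimple_lc_relabel_cases:
  "e \<noteq> Phi z \<Longrightarrow> nonsimple_lc_relabel H z e = e \<or> nonsimple_lc_relabel H z e = Phi z"
  by (auto simp: nonsimple_lc_relabel_def transpose_def)

lemma nonsimple_lc_relabel_other: "vtx e \<noteq> z \<Longrightarrow> nonsimple_lc_relabel H z e = e"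
  by (cases e) (auto simp: nonsimple_lc_relabel_def transpose_def)

lemma nonsimple_lc_relabel_eq_Phi:
  "vtx e = y \<Longrightarrow> \<not> is_phi e \<Longrightarrow> e \<noteq> nbhd_elem H y \<Longrightarrow> nonsimple_lc_relabel H y e = Phi y"
  by (cases e) (auto simp: nbhd_elem_def nonsimple_lc_relabel_def is_phi_def split: if_splits)

lemma nbhd_elem_nonsimple_lc:
  "y \<in> nbhd H z \<Longrightarrow> nbhd_elem (nonsimple_lc H z) y \<noteq> nbhd_elem H y"
  by (simp add: nbhd_elem_def amat_local_ops)

lemma transverse_circuit_nonsimple_lc_image:
  assumes "looped_simple_graph G" "v \<in> verts G" "transverse_circuit G C"
  shows "transverse_circuit (nonsimple_lc G v) (nonsimple_lc_relabel G v ` C)"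
  using transverse_circuit_nonsimple_lc_iff[OF assms(1,2), of "nonsimple_lc_relabel G v ` C"] assms(3)
  by (simp add: image_image nonsimple_lc_relabel_involutory)

lemma non_phi_vertices_nonsimple_lc_relabel:
  assumes "Phi z \<notin> C"
  shows "non_phi_vertices v (nonsimple_lc_relabel H z ` C) \<subseteq> non_phi_vertices v C"
proof
  fix x assume "x \<in> non_phi_vertices v (nonsimple_lc_relabel H z ` C)"
  then obtain f where f: "f \<in> C" "vtx f = x" "x \<noteq> v" "\<not> is_phi (nonsimple_lc_relabel H z f)"
    unfolding in_non_phi_vertices_iff by (auto simp: vtx_nonsimple_lc_relabel)
  then have "nonsimple_lc_relabel H z f = f"
    using nonsimple_lc_relabel_cases[of f z H] assms by (auto simp: is_phi_def)
  then show "x \<in> non_phi_vertices v C"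
    using f by (auto simp: in_non_phi_vertices_iff)
qed

lemma nonsimple_lc_clears_vertex:
  assumes H: "looped_simple_graph H" and tc: "transverse_circuit H C"
    and e: "e \<in> C" "vtx e = y" "\<not> is_phi e" "e \<noteq> nbhd_elem H y"
  shows "\<exists>H' C'. locally_equivalent H H' \<and> transverse_circuit H' C' \<and> card C' = card C \<and>
    non_phi_vertices v C' \<subseteq> non_phi_vertices v C - {y}"
proof (intro exI conjI)
  have y: "y \<in> verts H"
    using transverse_circuit_vtx_in_verts[OF tc e(1)] e(2) by simp
  show "locally_equivalent H (nonsimple_lc H y)"
    by (rule locally_equivalent.nsimp[OF locally_equivalent.refl y])
  show "transverse_circuit (nonsimple_lc H y) (nonsimple_lc_relabel H y ` C)"
    by (rule transverse_circuit_nonsimple_lc_image[OF H y tc])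
  show "card (nonsimple_lc_relabel H y ` C) = card C"
    by (rule card_image_involution[OF nonsimple_lc_relabel_involutory])
  have only_e: "f = e" if "f \<in> C" "vtx f = y" for f
    using transverse_circuit_vtx_inj[OF tc that(1) e(1)] that(2) e(2) by simp
  have "Phi y \<notin> C" using only_e[of "Phi y"] e(3) by (auto simp: is_phi_def)
  moreover have "y \<notin> non_phi_vertices v (nonsimple_lc_relabel H y ` C)"
  proof
    assume "y \<in> non_phi_vertices v (nonsimple_lc_relabel H y ` C)"
    then obtain f where "f \<in> C" "vtx f = y" "\<not> is_phi (nonsimple_lc_relabel H y f)"
      unfolding in_non_phi_vertices_iff by (auto simp: vtx_nonsimple_lc_relabel)
    then show False
      using only_e nonsimple_lc_relabel_eq_Phi[OF e(2-4)] by (auto simp: is_phi_def)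
  qed
  ultimately show "non_phi_vertices v (nonsimple_lc_relabel H y ` C) \<subseteq> non_phi_vertices v C - {y}"
    using non_phi_vertices_nonsimple_lc_relabel[of y C v H] by blast
qed

lemma nonsimple_lc_neighbour_clears_vertex:
  assumes H: "looped_simple_graph H" and tc: "transverse_circuit H C"
    and e: "e \<in> C" "vtx e = y" "\<not> is_phi e" "e = nbhd_elem H y"
    and z: "z \<in> nbhd H y" "Phi z \<notin> C"
  shows "\<exists>H' C'. locally_equivalent H H' \<and> transverse_circuit H' C' \<and> card C' = card C \<and>
    non_phi_vertices v C' \<subseteq> non_phi_vertices v C - {y}"
proof -
  define H1 where "H1 = nonsimple_lc H z"
  define C1 where "C1 = nonsimple_lc_relabel H z ` C"
  have zV: "z \<in> verts H" using nbhd_subset_verts[OF H] z(1) by blast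
  have "y \<in> nbhd H z"
    using z(1) amat_sym[OF H, of y z] by (auto simp: in_nbhd_iff)
  then have e_H1: "e \<noteq> nbhd_elem H1 y"
    using e(4) nbhd_elem_nonsimple_lc[of y H z] by (auto simp: H1_def)
  have "nonsimple_lc_relabel H z e = e"
    using z(1) e(2) by (intro nonsimple_lc_relabel_other) (auto simp: in_nbhd_iff)
  then have e_C1: "e \<in> C1" using e(1) unfolding C1_def by (metis image_eqI)
  have le1: "locally_equivalent H H1"
    unfolding H1_def by (rule locally_equivalent.nsimp[OF locally_equivalent.refl zV])
  have H1: "looped_simple_graph H1"
    unfolding H1_def by (rule looped_simple_graph_local_ops(3)[OF H zV])
  have tc1: "transverse_circuit H1 C1"
    unfolding H1_def C1_def by (rule transverse_circuit_nonsimple_lc_image[OF H zV tc])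
  have card1: "card C1 = card C"
    unfolding C1_def by (rule card_image_involution[OF nonsimple_lc_relabel_involutory])
  have non_phi1: "non_phi_vertices v C1 \<subseteq> non_phi_vertices v C"
    unfolding C1_def by (rule non_phi_vertices_nonsimple_lc_relabel[OF z(2)])
  obtain H' C' where "locally_equivalent H1 H'" "transverse_circuit H' C'" "card C' = card C1"
    "non_phi_vertices v C' \<subseteq> non_phi_vertices v C1 - {y}"
    using nonsimple_lc_clears_vertex[OF H1 tc1 e_C1 e(2,3) e_H1] by blast
  then show ?thesis
    using locally_equivalent_trans[OF _ le1] card1 non_phi1
    by (intro exI[of _ H'] exI[of _ C']) auto
qed

lemma transverse_circuit_clear_non_phi_vertex:
  assumes H: "looped_simple_graph H" and tc: "transverse_circuit H C"
    and y: "y \<in> non_phi_vertices v C"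
  shows "(\<exists>w\<in>verts H. degree H w = card C - 1) \<or>
    (\<exists>H' C'. locally_equivalent H H' \<and> transverse_circuit H' C' \<and> card C' = card C \<and>
       non_phi_vertices v C' \<subseteq> non_phi_vertices v C - {y})"
proof -
  obtain e where e: "e \<in> C" "vtx e = y" "\<not> is_phi e"
    using y by (auto simp: in_non_phi_vertices_iff)
  consider (other) "e \<noteq> nbhd_elem H y"
    | (nbhd_full) "e = nbhd_elem H y" "Phi ` nbhd H y \<subseteq> C"
    | (nbhd_gap) z where "e = nbhd_elem H y" "z \<in> nbhd H y" "Phi z \<notin> C"
    by blast
  then show ?thesis
  proof cases
    case other
    then show ?thesis using nonsimple_lc_clears_vertex[OF H tc e] by (intro disjI2)
  next
    case nbhd_full
    have yV: "y \<in> verts H"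
      using transverse_circuit_vtx_in_verts[OF tc e(1)] e(2) by simp
    have "nbhd_circuit H y \<subseteq> C" using nbhd_full e(1) by (simp add: nbhd_circuit_def)
    then have "nbhd_circuit H y = C"
      using ias_circuit_not_psubset tc transverse_circuit_nbhd_circuit[OF H yV]
      unfolding transverse_circuit_def by blast
    then have "degree H y = card C - 1" using card_nbhd_circuit[OF H, of y] by simp
    then show ?thesis using yV by blast
  next
    case nbhd_gap
    then show ?thesis using nonsimple_lc_neighbour_clears_vertex[OF H tc e] by (intro disjI2)
  qed
qed

lemma transverse_circuit_locally_equivalent_degree:
  assumes "looped_simple_graph H" "transverse_circuit H C" "v \<in> verts H"
  shows "\<exists>H'. locally_equivalent H H' \<and> looped_simple_graph H' \<and>
    (\<exists>w\<in>verts H'. degree H' w = card C - 1)"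
  using assms
proof (induction "card (non_phi_vertices v C)" arbitrary: H C rule: less_induct)
  case less
  note H = less.prems(1) and tc = less.prems(2) and v = less.prems(3)
  show ?case
  proof (cases "non_phi_vertices v C = {}")
    case True
    then have "degree H v = card C - 1"
      using transverse_circuit_eq_nbhd_circuit[OF H tc True] card_nbhd_circuit[OF H, of v] by simp
    then show ?thesis using H v locally_equivalent.refl by blast
  next
    case False
    then obtain y where y: "y \<in> non_phi_vertices v C" by blast
    show ?thesis
    proof (cases "\<exists>w\<in>verts H. degree H w = card C - 1")
      case True
      then show ?thesis using H locally_equivalent.refl by blast
    next
      case False
      then obtain H1 C1 where le1: "locally_equivalent H H1" and tc1: "transverse_circuit H1 C1"
        and card1: "card C1 = card C" and non_phi1: "non_phi_vertices v C1 \<subseteq> non_phi_vertices v C - {y}"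
        using transverse_circuit_clear_non_phi_vertex[OF H tc y] by blast
      have "finite (non_phi_vertices v C)"
        using transverse_circuit_finite[OF _ tc] H
        by (simp add: non_phi_vertices_def looped_simple_graph_def)
      moreover have "non_phi_vertices v C1 \<subset> non_phi_vertices v C"
        using non_phi1 y by blast
      ultimately have smaller: "card (non_phi_vertices v C1) < card (non_phi_vertices v C)"
        by (simp add: psubset_card_mono)
      have H1: "looped_simple_graph H1" "v \<in> verts H1"
        using locally_equivalent_looped_simple_graph[OF le1 H] v by auto
      obtain H' where "locally_equivalent H1 H'" "looped_simple_graph H'"
        "\<exists>w\<in>verts H'. degree H' w = card C1 - 1"
        using less.hyps[OF smaller H1(1) tc1 H1(2)] by blast
      then show ?thesis
        using card1 locally_equivalent_trans[OF _ le1] by (intro exI[of _ H']) simp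
    qed
  qed
qed

theorem corollary1p4:
  fixes G :: "'a lgraph" and k :: nat
  assumes "looped_simple_graph G" and "k > 0"
  shows "(\<exists>C. transverse_circuit G C \<and> card C = k) \<longleftrightarrow>
         (\<exists>H. locally_equivalent G H \<and> looped_simple_graph H \<and>
              (\<exists>v \<in> verts H. degree H v = k - 1))"
proof
  assume "\<exists>C. transverse_circuit G C \<and> card C = k"
  then obtain C where C: "transverse_circuit G C" "card C = k" by blast
  then obtain e where "e \<in> C" using assms(2) by fastforce
  then have "vtx e \<in> verts G"
    by (rule transverse_circuit_vtx_in_verts[OF C(1)])
  then show "\<exists>H. locally_equivalent G H \<and> looped_simple_graph H \<and> (\<exists>v \<in> verts H. degree H v = k - 1)"
    using transverse_circuit_locally_equivalent_degree[OF assms(1) C(1)] C(2) by blast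
next
  assume "\<exists>H. locally_equivalent G H \<and> looped_simple_graph H \<and> (\<exists>v \<in> verts H. degree H v = k - 1)"
  then obtain H v where H: "locally_equivalent G H" "looped_simple_graph H" "v \<in> verts H"
    "degree H v = k - 1"
    by blast
  have "card (nbhd_circuit H v) = k"
    using card_nbhd_circuit[OF H(2), of v] H(4) assms(2) by simp
  then show "\<exists>C. transverse_circuit G C \<and> card C = k"
    using locally_equivalent_transverse_circuit[OF H(1) assms(1)]
      transverse_circuit_nbhd_circuit[OF H(2,3)] by metis
qed

end
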